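(* Let $C_1 \subseteq \mathbb{R}^2$ be convex, let $\mathbf{t} \in \mathbb{R}^2$ be a nonzero vector, and let $C_2 = C_1 + \mathbf{t} = \{x + \mathbf{t} : x \in C_1\}$. Choose Cartesian coordinates whose positive $x$-axis points in the direction of $\mathbf{t}$. If $p \in C_1 \setminus C_2$ and $q \in C_2$ have the same $y$-coordinate, then the $x$-coordinate of $p$ is strictly smaller than that of $q$. Similarly, if $p \in C_2 \setminus C_1$ and $q \in C_1$ have the same $y$-coordinate, then the $x$-coordinate of $p$ is strictly larger than that of $q$. *)

theory Defs
  imports "HOL-Analysis.Analysis"
begin

text \<open>Points of the plane are elements of real^2.  Given a nonzero vector t,
  we use the Cartesian coordinate system (same origin) whose positive x-axis points
  in the direction of t and whose y-axis is t rotated by +90 degrees.\<close>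

definition perp2 :: "real^2 \<Rightarrow> real^2" where
  "perp2 v = vector [- (v$2), v$1]"

definition xcoord :: "real^2 \<Rightarrow> real^2 \<Rightarrow> real" where
  "xcoord t p = (p \<bullet> t) / norm t"

definition ycoord :: "real^2 \<Rightarrow> real^2 \<Rightarrow> real" where
  "ycoord t p = (p \<bullet> perp2 t) / norm t"

end

theory Submission
  imports Defs
begin

text \<open>Two points with the same y-coordinate differ by a multiple s t of the translation vector,
  where s has the sign of the difference of their x-coordinates. If the claimed inequality
  failed, the segment of the convex set C1 from p to q - t (resp. from p - t to q) would pass
  through p - t (resp. p), so p would lie in C2 (resp. C1), contrary to its choice.\<close>

lemma convex_mem_ray_between:
  fixes C :: "'a::real_vector set"
  assumes "convex C" "x \<in> C" "x + a *\<^sub>R v \<in> C" "0 \<le> b" "b \<le> a"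
  shows "x + b *\<^sub>R v \<in> C"
proof (cases "a = 0")
  case True
  with assms show ?thesis by simp
next
  case False
  then have "0 < a" using assms(4,5) by linarith
  have "(1 - b / a) *\<^sub>R x + (b / a) *\<^sub>R (x + a *\<^sub>R v) = x + b *\<^sub>R v"
    using \<open>0 < a\<close> by (simp add: algebra_simps)
  moreover have "0 \<le> b / a" "b / a \<le> 1"
    using \<open>0 < a\<close> assms(4,5) by auto
  ultimately show ?thesis
    using convexD_alt[OF assms(1-3)] by metis
qed

lemma vector_eq_xcoord_ycoord:
  fixes t d :: "real^2"
  assumes "t \<noteq> 0"
  shows "d = (xcoord t d / norm t) *\<^sub>R t + (ycoord t d / norm t) *\<^sub>R perp2 t"
proof -
  have "(t \<bullet> t) *\<^sub>R d = (d \<bullet> t) *\<^sub>R t + (d \<bullet> perp2 t) *\<^sub>R perp2 t"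
    by (simp add: vec_eq_iff forall_2 perp2_def inner_vec_def sum_2 algebra_simps)
  then have "d = (1 / (t \<bullet> t)) *\<^sub>R ((d \<bullet> t) *\<^sub>R t + (d \<bullet> perp2 t) *\<^sub>R perp2 t)"
    using assms by (metis inner_eq_zero_iff scaleR_one scaleR_scaleR nonzero_divide_eq_eq)
  then show ?thesis
    by (simp add: xcoord_def ycoord_def scaleR_add_right dot_square_norm power2_eq_square)
qed

lemma eq_ycoord_imp_eq_add_scaleR:
  fixes t p q :: "real^2"
  assumes "t \<noteq> 0" "ycoord t p = ycoord t q"
  shows "q = p + ((xcoord t q - xcoord t p) / norm t) *\<^sub>R t"
proof -
  have "xcoord t (q - p) = xcoord t q - xcoord t p" "ycoord t (q - p) = 0"
    using assms(2) by (auto simp: xcoord_def ycoord_def inner_diff_left diff_divide_distrib)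
  with vector_eq_xcoord_ycoord[OF assms(1), of "q - p"] show ?thesis
    by (simp add: algebra_simps)
qed

theorem mainTheorem3:
  fixes C1 :: "(real^2) set" and t :: "real^2"
  assumes "convex C1" and "t \<noteq> 0"
  defines "C2 \<equiv> (\<lambda>x. x + t) ` C1"
  shows "(\<forall>p q. p \<in> C1 - C2 \<longrightarrow> q \<in> C2 \<longrightarrow> ycoord t p = ycoord t q
            \<longrightarrow> xcoord t p < xcoord t q)
       \<and> (\<forall>p q. p \<in> C2 - C1 \<longrightarrow> q \<in> C1 \<longrightarrow> ycoord t p = ycoord t q
            \<longrightarrow> xcoord t p > xcoord t q)"
proof (intro conjI allI impI)
  fix p q assume p: "p \<in> C1 - C2" and "q \<in> C2" and "ycoord t p = ycoord t q"
  define s where "s = (xcoord t q - xcoord t p) / norm t"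
  have q: "q = p + s *\<^sub>R t"
    using eq_ycoord_imp_eq_add_scaleR[OF assms(2) \<open>ycoord t p = ycoord t q\<close>] by (simp add: s_def)
  show "xcoord t p < xcoord t q"
  proof (rule ccontr)
    assume "\<not> ?thesis"
    then have "s \<le> 0" by (simp add: s_def divide_nonpos_pos assms(2))
    have "q - t \<in> C1" using \<open>q \<in> C2\<close> by (auto simp: C2_def)
    then have "p + (1 - s) *\<^sub>R (- t) \<in> C1" by (simp add: q algebra_simps)
    with convex_mem_ray_between[OF assms(1), of p "1 - s" "- t" 1] p \<open>s \<le> 0\<close>
    have "p - t \<in> C1" by simp
    then have "p \<in> C2" unfolding C2_def by (rule rev_image_eqI) simp
    with p show False by simp
  qed
next
  fix p q assume p: "p \<in> C2 - C1" and "q \<in> C1" and "ycoord t p = ycoord t q"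
  define s where "s = (xcoord t q - xcoord t p) / norm t"
  have q: "q = p + s *\<^sub>R t"
    using eq_ycoord_imp_eq_add_scaleR[OF assms(2) \<open>ycoord t p = ycoord t q\<close>] by (simp add: s_def)
  obtain p0 where "p0 \<in> C1" "p = p0 + t" using p by (auto simp: C2_def)
  show "xcoord t p > xcoord t q"
  proof (rule ccontr)
    assume "\<not> ?thesis"
    then have "s \<ge> 0" by (simp add: s_def)
    have "p0 + (1 + s) *\<^sub>R t \<in> C1"
      using \<open>q \<in> C1\<close> by (simp add: q \<open>p = p0 + t\<close> algebra_simps)
    with convex_mem_ray_between[OF assms(1) \<open>p0 \<in> C1\<close>, of "1 + s" t 1] \<open>s \<ge> 0\<close>
    have "p \<in> C1" by (simp add: \<open>p = p0 + t\<close>)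
    with p show False by simp
  qed
qed

end
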